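(* For every parallel offering instance $I$, the policy $\mathsf{ALG}_{\mathtt{par}}$ defined below satisfies $R_{\mathsf{ALG}_{\mathtt{par}}}(I)\ge(1-1/e)\,\mathrm{LP}_{\mathtt{par}}(I)\ge(1-1/e)\,\mathsf{OPT}_{\mathtt{par}}(I)$. Policy $\mathsf{ALG}_{\mathtt{par}}$: take an optimal solution $y$ of $\mathrm{LP}_{\mathtt{par}}(I)$ and, independently of the candidates' acceptance decisions, generate a random matrix $Y\in\{0,1\}^{n\times k}$ by the Gandhi–Khuller–Parthasarathy–Srinivasan dependent rounding of $y$ on the complete bipartite graph between candidates $[n]$ and positions $[k]$ (edge weights $y_{ij}$). Form for each position $j$ the list $L_j=\{i:Y_{ij}=1\}$ (so $|L_j|\le T$ and each candidate belongs to at most one list). Run the lists in parallel: in each round, for each position $j$ not yet filled, send an offer for $j$ to the not-yet-offered candidate of $L_j$ with largest $v_{ij}$ (if any remains).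
   Context: Parallel offering problem: integers $1\le k\le T\le n$; $n$ candidates, $k$ positions; $p_{ij}\in[0,1]$ acceptance probability and $v_{ij}\ge0$ value of candidate $i$ for position $j$; acceptance indicators $A_{ij}$ with $\mathbb{P}(A_{ij}=1)=p_{ij}$, possibly correlated across positions for the same candidate but independent across candidates, fixed before the process. In each of $T$ rounds the firm may send at most one offer per unfilled position; each candidate receives at most one offer in total; if $i$ receives an offer for $j$ and $A_{ij}=1$ then $j$ is filled and the firm earns $v_{ij}$. $R_\pi(I)$ is expected total value; $\mathsf{OPT}_{\mathtt{par}}(I)$ the supremum over all (adaptive) policies. $\mathrm{LP}_{\mathtt{par}}(I)$: maximize $\sum_{j,i}v_{ij}p_{ij}y_{ij}$ s.t. $\sum_i y_{ij}\le T\ \forall j$; $\sum_ip_{ij}y_{ij}\le1\ \forall j$; $\sum_jy_{ij}\le1\ \forall i$; $0\le y_{ij}\le1$. The GKPS dependent rounding of weights $y_e\in[0,1]$ on the edges of a bipartite graph outputs random $Y_e\in\{0,1\}$ with: (P1) $\mathbb{E}Y_e=y_e$; (P2) for every vertex $u$, $\sum_{e\ni u}Y_e\in\{\lfloor\ell_u\rfloor,\lceil\ell_u\rceil\}$ almost surely, where $\ell_u=\sum_{e\ni u}y_e$; (P3) for every vertex $u$, every set $S$ of edges incident to $u$ and $b\in\{0,1\}$, $\mathbb{P}(\bigcap_{e\in S}\{Y_e=b\})\le\prod_{e\in S}\mathbb{P}(Y_e=b)$. *)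

theory Defs
  imports "HOL-Probability.Probability"
begin

text \<open>Candidates are 0..<n, positions are 0..<k.
  A history is the list of rounds played so far; each round is the list of
  offers (candidate i, position j, accepted?) made in that round.\<close>

type_synonym history = "(nat \<times> nat \<times> bool) list list"

text \<open>A (deterministic, adaptive) policy maps the history to the offers of the
  next round: for each position j, optionally a candidate to receive an offer for j.\<close>

type_synonym policy = "history \<Rightarrow> nat \<Rightarrow> nat option"

definition filled :: "history \<Rightarrow> nat \<Rightarrow> bool" where
  "filled h j \<longleftrightarrow> (\<exists>i. (i, j, True) \<in> set (concat h))"

definition offered :: "history \<Rightarrow> nat \<Rightarrow> bool" where
  "offered h i \<longleftrightarrow> (\<exists>j b. (i, j, b) \<in> set (concat h))"

definition valid_round :: "nat \<Rightarrow> nat \<Rightarrow> history \<Rightarrow> (nat \<Rightarrow> nat option) \<Rightarrow> bool" where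
  "valid_round n k h off \<longleftrightarrow>
     (\<forall>j i. off j = Some i \<longrightarrow> j < k \<and> \<not> filled h j \<and> i < n \<and> \<not> offered h i) \<and>
     (\<forall>j j' i. off j = Some i \<and> off j' = Some i \<longrightarrow> j = j')"

text \<open>Outcome of one round given the acceptance indicators a (a i j = A_ij).
  An invalid round of offers is ignored (no offers are sent).\<close>

definition round_outcome ::
  "nat \<Rightarrow> nat \<Rightarrow> history \<Rightarrow> (nat \<Rightarrow> nat option) \<Rightarrow> (nat \<Rightarrow> nat \<Rightarrow> bool) \<Rightarrow> (nat \<times> nat \<times> bool) list" where
  "round_outcome n k h off a =
     (if valid_round n k h off
      then concat (map (\<lambda>j. case off j of None \<Rightarrow> [] | Some i \<Rightarrow> [(i, j, a i j)]) [0..<k])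
      else [])"

fun run :: "nat \<Rightarrow> nat \<Rightarrow> policy \<Rightarrow> (nat \<Rightarrow> nat \<Rightarrow> bool) \<Rightarrow> nat \<Rightarrow> history" where
  "run n k pol a 0 = []"
| "run n k pol a (Suc t) =
     (let h = run n k pol a t in h @ [round_outcome n k h (pol h) a])"

definition reward :: "(nat \<Rightarrow> nat \<Rightarrow> real) \<Rightarrow> history \<Rightarrow> real" where
  "reward v h = (\<Sum>(i, j, b) \<leftarrow> concat h. if b then v i j else 0)"

text \<open>Joint law of the acceptance indicators: D i is the law of candidate i's
  acceptance vector (j \<mapsto> A_ij), arbitrary correlation across positions;
  independent across candidates (product measure).\<close>

definition accept_dist :: "nat \<Rightarrow> (nat \<Rightarrow> (nat \<Rightarrow> bool) pmf) \<Rightarrow> (nat \<Rightarrow> nat \<Rightarrow> bool) pmf" where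
  "accept_dist n D = Pi_pmf {..<n} (\<lambda>_. False) D"

definition R_pol :: "nat \<Rightarrow> nat \<Rightarrow> nat \<Rightarrow> (nat \<Rightarrow> (nat \<Rightarrow> bool) pmf) \<Rightarrow> (nat \<Rightarrow> nat \<Rightarrow> real)
    \<Rightarrow> policy \<Rightarrow> real" where
  "R_pol n k T D v pol =
     measure_pmf.expectation (accept_dist n D) (\<lambda>a. reward v (run n k pol a T))"

text \<open>Randomized policies (pmf over deterministic policies, drawn independently of
  the acceptance indicators).\<close>

definition R_rand :: "nat \<Rightarrow> nat \<Rightarrow> nat \<Rightarrow> (nat \<Rightarrow> (nat \<Rightarrow> bool) pmf) \<Rightarrow> (nat \<Rightarrow> nat \<Rightarrow> real)
    \<Rightarrow> policy pmf \<Rightarrow> real" where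
  "R_rand n k T D v Q = measure_pmf.expectation Q (\<lambda>pol. R_pol n k T D v pol)"

definition OPT_par :: "nat \<Rightarrow> nat \<Rightarrow> nat \<Rightarrow> (nat \<Rightarrow> (nat \<Rightarrow> bool) pmf) \<Rightarrow> (nat \<Rightarrow> nat \<Rightarrow> real) \<Rightarrow> real" where
  "OPT_par n k T D v = (SUP Q. R_rand n k T D v Q)"

definition lp_feasible :: "nat \<Rightarrow> nat \<Rightarrow> nat \<Rightarrow> (nat \<Rightarrow> nat \<Rightarrow> real) \<Rightarrow> (nat \<Rightarrow> nat \<Rightarrow> real) \<Rightarrow> bool" where
  "lp_feasible n k T p y \<longleftrightarrow>
     (\<forall>j<k. (\<Sum>i<n. y i j) \<le> real T) \<and>
     (\<forall>j<k. (\<Sum>i<n. p i j * y i j) \<le> 1) \<and>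
     (\<forall>i<n. (\<Sum>j<k. y i j) \<le> 1) \<and>
     (\<forall>i<n. \<forall>j<k. 0 \<le> y i j \<and> y i j \<le> 1)"

definition lp_obj :: "nat \<Rightarrow> nat \<Rightarrow> (nat \<Rightarrow> nat \<Rightarrow> real) \<Rightarrow> (nat \<Rightarrow> nat \<Rightarrow> real) \<Rightarrow> (nat \<Rightarrow> nat \<Rightarrow> real) \<Rightarrow> real" where
  "lp_obj n k p v y = (\<Sum>j<k. \<Sum>i<n. v i j * p i j * y i j)"

definition LP_par :: "nat \<Rightarrow> nat \<Rightarrow> nat \<Rightarrow> (nat \<Rightarrow> nat \<Rightarrow> real) \<Rightarrow> (nat \<Rightarrow> nat \<Rightarrow> real) \<Rightarrow> real" where
  "LP_par n k T p v = (SUP y \<in> {y. lp_feasible n k T p y}. lp_obj n k p v y)"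

definition lp_optimal :: "nat \<Rightarrow> nat \<Rightarrow> nat \<Rightarrow> (nat \<Rightarrow> nat \<Rightarrow> real) \<Rightarrow> (nat \<Rightarrow> nat \<Rightarrow> real) \<Rightarrow> (nat \<Rightarrow> nat \<Rightarrow> real) \<Rightarrow> bool" where
  "lp_optimal n k T p v y \<longleftrightarrow> lp_feasible n k T p y \<and>
     (\<forall>y'. lp_feasible n k T p y' \<longrightarrow> lp_obj n k p v y' \<le> lp_obj n k p v y)"

text \<open>GKPS dependent rounding of weights y on the complete bipartite graph
  [n] x [k], characterised by properties (P1)-(P3). Y i j = True means Y_ij = 1.\<close>

definition gkps_rounding :: "nat \<Rightarrow> nat \<Rightarrow> (nat \<Rightarrow> nat \<Rightarrow> real) \<Rightarrow> (nat \<Rightarrow> nat \<Rightarrow> bool) pmf \<Rightarrow> bool" where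
  "gkps_rounding n k y Yd \<longleftrightarrow>
     \<comment> \<open>(P1)\<close>
     (\<forall>i<n. \<forall>j<k. measure_pmf.prob Yd {Y. Y i j} = y i j) \<and>
     \<comment> \<open>(P2) at candidate vertices and at position vertices\<close>
     (\<forall>Y\<in>set_pmf Yd. \<forall>i<n.
        real (card {j. j < k \<and> Y i j}) \<in> {of_int \<lfloor>\<Sum>j<k. y i j\<rfloor>, of_int \<lceil>\<Sum>j<k. y i j\<rceil>}) \<and>
     (\<forall>Y\<in>set_pmf Yd. \<forall>j<k.
        real (card {i. i < n \<and> Y i j}) \<in> {of_int \<lfloor>\<Sum>i<n. y i j\<rfloor>, of_int \<lceil>\<Sum>i<n. y i j\<rceil>}) \<and>
     \<comment> \<open>(P3) at candidate vertices and at position vertices\<close>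
     (\<forall>i<n. \<forall>S\<subseteq>{..<k}. \<forall>b.
        measure_pmf.prob Yd {Y. \<forall>j\<in>S. Y i j = b} \<le> (\<Prod>j\<in>S. measure_pmf.prob Yd {Y. Y i j = b})) \<and>
     (\<forall>j<k. \<forall>S\<subseteq>{..<n}. \<forall>b.
        measure_pmf.prob Yd {Y. \<forall>i\<in>S. Y i j = b} \<le> (\<Prod>i\<in>S. measure_pmf.prob Yd {Y. Y i j = b}))"

definition alg_policy :: "nat \<Rightarrow> nat \<Rightarrow> (nat \<Rightarrow> nat \<Rightarrow> real) \<Rightarrow> (nat \<Rightarrow> nat \<Rightarrow> bool) \<Rightarrow> policy" where
  "alg_policy n k v Y h j =
     (let C = {i. i < n \<and> Y i j \<and> \<not> offered h i} in
      if j < k \<and> \<not> filled h j \<and> C \<noteq> {}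
      then Some (LEAST i. i \<in> C \<and> (\<forall>i'\<in>C. v i' j \<le> v i j))
      else None)"

definition R_alg :: "nat \<Rightarrow> nat \<Rightarrow> nat \<Rightarrow> (nat \<Rightarrow> (nat \<Rightarrow> bool) pmf) \<Rightarrow> (nat \<Rightarrow> nat \<Rightarrow> real)
    \<Rightarrow> (nat \<Rightarrow> nat \<Rightarrow> bool) pmf \<Rightarrow> real" where
  "R_alg n k T D v Yd = measure_pmf.expectation Yd (\<lambda>Y. R_pol n k T D v (alg_policy n k v Y))"

end

theory Submission
  imports Defs
begin

(* For a fixed deterministic policy, the probabilities y_ij that candidate i is offered position j
   form a feasible solution of the LP whose objective is the expected reward: whether i is offered j
   is decided without looking at A_ij, so i accepts j with probability p_ij y_ij. Hence OPT <= LP.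
   For ALG, property (P2) makes the lists L_j disjoint and of size at most T, so position j ends up
   with value at least the best v_ij among the accepting candidates of L_j. Writing this maximum as
   a layered sum over value thresholds reduces its expectation to the probabilities that some
   candidate of a set U lies in L_j and accepts; by independence and the negative correlation (P3)
   these are at least 1 - prod (1 - p_ij y_ij) >= (1 - 1/e) sum p_ij y_ij. *)

section \<open>Runs of a policy\<close>

definition offers ::
    "nat \<Rightarrow> nat \<Rightarrow> policy \<Rightarrow> (nat \<Rightarrow> nat \<Rightarrow> bool) \<Rightarrow> nat \<Rightarrow> (nat \<times> nat \<times> bool) set" where
  "offers n k pol a t = set (concat (run n k pol a t))"

abbreviation new_offers ::
    "nat \<Rightarrow> nat \<Rightarrow> policy \<Rightarrow> (nat \<Rightarrow> nat \<Rightarrow> bool) \<Rightarrow> nat \<Rightarrow> (nat \<times> nat \<times> bool) set" where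
  "new_offers n k pol a t \<equiv> set (round_outcome n k (run n k pol a t) (pol (run n k pol a t)) a)"

lemma mem_round_outcome:
  "x \<in> set (round_outcome n k h off a) \<longleftrightarrow>
     valid_round n k h off \<and> (\<exists>i j. x = (i, j, a i j) \<and> j < k \<and> off j = Some i)"
  unfolding round_outcome_def by (auto split: option.splits)

lemma mem_new_offers:
  "(i, j, b) \<in> new_offers n k pol a t \<longleftrightarrow>
     valid_round n k (run n k pol a t) (pol (run n k pol a t)) \<and>
     j < k \<and> b = a i j \<and> pol (run n k pol a t) j = Some i"
  unfolding mem_round_outcome by auto

lemma offers_0 [simp]: "offers n k pol a 0 = {}"
  by (simp add: offers_def)

lemma offers_Suc: "offers n k pol a (Suc t) = offers n k pol a t \<union> new_offers n k pol a t"
  by (simp add: offers_def Let_def)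

lemma offers_mono: "offers n k pol a t \<subseteq> offers n k pol a (Suc t)"
  by (simp add: offers_Suc)

lemma filled_run_iff: "filled (run n k pol a t) j \<longleftrightarrow> (\<exists>i. (i, j, True) \<in> offers n k pol a t)"
  by (simp add: filled_def offers_def)

lemma offered_run_iff: "offered (run n k pol a t) i \<longleftrightarrow> (\<exists>j b. (i, j, b) \<in> offers n k pol a t)"
  by (simp add: offered_def offers_def)

lemma finite_offers: "finite (offers n k pol a t)"
  by (simp add: offers_def)

lemma new_offerD:
  assumes "(i, j, b) \<in> new_offers n k pol a t"
  shows "i < n \<and> j < k \<and> b = a i j \<and> pol (run n k pol a t) j = Some i \<and>
    (\<forall>i'. (i', j, True) \<notin> offers n k pol a t) \<and> (\<forall>j' b'. (i, j', b') \<notin> offers n k pol a t) \<and>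
    (\<forall>j'. pol (run n k pol a t) j' = Some i \<longrightarrow> j' = j)"
  using assms unfolding mem_new_offers valid_round_def filled_run_iff offered_run_iff by blast

lemma offers_in_range: "(i, j, b) \<in> offers n k pol a t \<Longrightarrow> i < n \<and> j < k \<and> b = a i j"
  by (induction t) (auto simp: offers_Suc dest: new_offerD)

lemma accepted_offer_unique:
  "(i, j, True) \<in> offers n k pol a t \<Longrightarrow> (i', j, True) \<in> offers n k pol a t \<Longrightarrow> i = i'"
proof (induction t)
  case (Suc t)
  then have "(i, j, True) \<in> offers n k pol a t \<or> (i, j, True) \<in> new_offers n k pol a t"
    "(i', j, True) \<in> offers n k pol a t \<or> (i', j, True) \<in> new_offers n k pol a t"
    by (simp_all add: offers_Suc)
  then show ?case
    using Suc.IH new_offerD[of i j True n k pol a t] new_offerD[of i' j True n k pol a t]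
    by (metis option.inject)
qed simp

lemma offered_candidate_unique:
  "(i, j, b) \<in> offers n k pol a t \<Longrightarrow> (i, j', b') \<in> offers n k pol a t \<Longrightarrow> j = j'"
proof (induction t)
  case (Suc t)
  then have "(i, j, b) \<in> offers n k pol a t \<or> (i, j, b) \<in> new_offers n k pol a t"
    "(i, j', b') \<in> offers n k pol a t \<or> (i, j', b') \<in> new_offers n k pol a t"
    by (simp_all add: offers_Suc)
  then show ?case
    using Suc.IH new_offerD[of i j b n k pol a t] new_offerD[of i j' b' n k pol a t] by metis
qed simp

lemma card_offered_at_position_le: "card {i \<in> I. \<exists>b. (i, j, b) \<in> offers n k pol a t} \<le> t"
proof (induction t)
  case (Suc t)
  let ?h = "run n k pol a t"
  let ?O = "\<lambda>t. {i \<in> I. \<exists>b. (i, j, b) \<in> offers n k pol a t}"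
  have "finite (?O t)"
    by (rule finite_subset[OF _ finite_imageI[OF finite_offers, of fst]]) force
  moreover have "?O (Suc t) \<subseteq> insert (the (pol ?h j)) (?O t)"
    unfolding offers_Suc by (auto simp: mem_new_offers)
  ultimately have "card (?O (Suc t)) \<le> card (insert (the (pol ?h j)) (?O t))"
    by (intro card_mono) auto
  also have "\<dots> \<le> card (?O t) + 1"
    using \<open>finite (?O t)\<close> by (simp add: card_insert_if)
  finally show ?case using Suc.IH by linarith
qed simp

lemma card_accepted_at_position_le: "card {i \<in> I. (i, j, True) \<in> offers n k pol a t} \<le> 1"
proof -
  have fin: "finite {i \<in> I. (i, j, True) \<in> offers n k pol a t}"
    by (rule finite_subset[OF _ finite_imageI[OF finite_offers, of fst]]) force
  show ?thesis
    unfolding One_nat_def card_le_Suc0_iff_eq[OF fin] using accepted_offer_unique by blast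
qed

lemma card_offered_positions_le: "card {j \<in> J. \<exists>b. (i, j, b) \<in> offers n k pol a t} \<le> 1"
proof -
  have fin: "finite {j \<in> J. \<exists>b. (i, j, b) \<in> offers n k pol a t}"
    by (rule finite_subset[OF _ finite_imageI[OF finite_offers, of "fst \<circ> snd"]]) force
  show ?thesis
    unfolding One_nat_def card_le_Suc0_iff_eq[OF fin] using offered_candidate_unique by blast
qed

lemma distinct_concat_map_at_most_one:
  assumes "distinct xs" "\<And>x. length (f x) \<le> 1" "\<And>x y z. z \<in> set (f x) \<Longrightarrow> z \<in> set (f y) \<Longrightarrow> x = y"
  shows "distinct (concat (map f xs))"
  using assms(1)
proof (induction xs)
  case (Cons x xs)
  have "distinct (f x)"
    using assms(2)[of x] by (cases "f x") auto
  moreover have "set (f x) \<inter> set (concat (map f xs)) = {}"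
    using Cons.prems assms(3) by fastforce
  ultimately show ?case using Cons by simp
qed simp

lemma distinct_run: "distinct (concat (run n k pol a t))"
proof (induction t)
  case (Suc t)
  let ?h = "run n k pol a t"
  have "distinct (round_outcome n k ?h (pol ?h) a)"
    unfolding round_outcome_def
    by (auto intro!: distinct_concat_map_at_most_one split: option.splits)
  moreover have "set (concat ?h) \<inter> new_offers n k pol a t = {}"
    using new_offerD unfolding offers_def by fast
  ultimately show ?case using Suc by (simp add: Let_def)
qed simp

lemma reward_run:
  "reward v (run n k pol a t) = (\<Sum>i<n. \<Sum>j<k. if (i, j, True) \<in> offers n k pol a t then v i j else 0)"
proof -
  let ?E = "offers n k pol a t"
  let ?g = "\<lambda>(i::nat, j::nat, b::bool). if b then v i j else (0::real)"
  let ?Q = "{q \<in> {..<n} \<times> {..<k}. (fst q, snd q, True) \<in> ?E}"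
  have fin: "finite ?E" by (rule finite_offers)
  have "reward v (run n k pol a t) = sum ?g ?E"
    unfolding reward_def offers_def by (rule sum_list_distinct_conv_sum_set[OF distinct_run])
  also have "\<dots> = sum ?g {e \<in> ?E. snd (snd e)}"
    by (rule sum.mono_neutral_right) (use fin in \<open>auto split: if_splits\<close>)
  also have "{e \<in> ?E. snd (snd e)} = (\<lambda>(i, j). (i, j, True)) ` ?Q"
    using offers_in_range by fastforce
  also have "sum ?g \<dots> = sum (\<lambda>(i, j). v i j) ?Q"
    by (subst sum.reindex) (auto simp: inj_on_def case_prod_unfold)
  also have "\<dots> = (\<Sum>q\<in>{..<n} \<times> {..<k}. if (fst q, snd q, True) \<in> ?E then v (fst q) (snd q) else 0)"
    by (subst sum.inter_filter[symmetric]) (auto simp: case_prod_unfold)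
  also have "\<dots> = (\<Sum>i<n. \<Sum>j<k. if (i, j, True) \<in> ?E then v i j else 0)"
    by (simp add: sum.cartesian_product case_prod_unfold)
  finally show ?thesis .
qed

lemma round_outcome_upd_unoffered:
  assumes "\<not> (valid_round n k h off \<and> (\<exists>j. off j = Some i))"
  shows "round_outcome n k h off (a(i := c)) = round_outcome n k h off a"
  using assms unfolding round_outcome_def
  by (auto intro!: arg_cong[where f = concat] map_cong split: option.splits)

lemma run_upd_unoffered:
  "\<not> offered (run n k pol a t) i \<Longrightarrow> run n k pol (a(i := c)) t = run n k pol a t"
proof (induction t)
  case (Suc t)
  let ?h = "run n k pol a t"
  have "\<not> offered ?h i"
    using Suc.prems offers_mono unfolding offered_run_iff by blast
  then have same_history: "run n k pol (a(i := c)) t = ?h"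
    by (rule Suc.IH)
  have "\<not> (valid_round n k ?h (pol ?h) \<and> (\<exists>j. pol ?h j = Some i))"
  proof
    assume "valid_round n k ?h (pol ?h) \<and> (\<exists>j. pol ?h j = Some i)"
    then obtain j where "valid_round n k ?h (pol ?h)" "pol ?h j = Some i" "j < k"
      unfolding valid_round_def by blast
    then have "(i, j, a i j) \<in> new_offers n k pol a t"
      by (simp add: mem_new_offers)
    then show False
      using Suc.prems unfolding offered_run_iff offers_Suc by blast
  qed
  then have "round_outcome n k ?h (pol ?h) (a(i := c)) = round_outcome n k ?h (pol ?h) a"
    by (rule round_outcome_upd_unoffered)
  then show ?case
    by (simp only: run.simps Let_def same_history)
qed simp

text \<open>Whether candidate i is offered position j does not depend on i's own acceptance
  indicators: they only influence the run after i has received its single offer.\<close>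

lemma offered_upd_iff:
  "(\<exists>b. (i, j, b) \<in> offers n k pol (a(i := c)) t) \<longleftrightarrow> (\<exists>b. (i, j, b) \<in> offers n k pol a t)"
proof (induction t arbitrary: j)
  case (Suc t)
  show ?case
  proof (cases "offered (run n k pol a t) i")
    case True
    then have "offered (run n k pol (a(i := c)) t) i"
      using Suc.IH unfolding offered_run_iff by blast
    then show ?thesis
      using True Suc.IH new_offerD unfolding offers_Suc offered_run_iff by blast
  next
    case False
    then have same_history: "run n k pol (a(i := c)) t = run n k pol a t"
      by (rule run_upd_unoffered)
    then have "offers n k pol (a(i := c)) t = offers n k pol a t"
      unfolding offers_def by simp
    then show ?thesis
      unfolding offers_Suc same_history by (auto simp: mem_round_outcome)
  qed
qed simp

lemma integrable_pmf_bounded: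
  fixes f :: "'a \<Rightarrow> real"
  assumes "\<And>x. \<bar>f x\<bar> \<le> B"
  shows "integrable (measure_pmf M) f"
  by (rule measure_pmf.integrable_const_bound[where B = B]) (use assms in auto)

lemma integrable_pmf_if [intro]: "integrable (measure_pmf M) (\<lambda>x. if P x then (c::real) else 0)"
  by (rule integrable_pmf_bounded[where B = "\<bar>c\<bar>"]) auto

lemma integrable_pmf_of_bool [intro]: "integrable (measure_pmf M) (\<lambda>x. of_bool (P x) :: real)"
  by (rule integrable_pmf_bounded[where B = 1]) auto

lemma expectation_if_const:
  "measure_pmf.expectation M (\<lambda>x. if P x then (c::real) else 0) = c * measure_pmf.prob M {x. P x}"
proof -
  have "(\<lambda>x. if P x then c else 0) = (\<lambda>x. c * indicator {x. P x} x)"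
    by (auto simp: indicator_def)
  then show ?thesis by simp
qed

lemma prob_eq_expectation_of_bool:
  "measure_pmf.prob M {x. P x} = measure_pmf.expectation M (\<lambda>x. of_bool (P x))"
  using expectation_if_const[of M P 1] by (simp add: of_bool_def)

lemma prob_Collect_not: "measure_pmf.prob M {x. \<not> P x} = 1 - measure_pmf.prob M {x. P x}"
proof -
  have "{x. \<not> P x} = space (measure_pmf M) - {x. P x}" by auto
  then show ?thesis using measure_pmf.prob_compl[of "{x. P x}" M] by simp
qed

lemma integral_double_sum:
  fixes f :: "'i \<Rightarrow> 'j \<Rightarrow> 'a \<Rightarrow> real"
  assumes "\<And>i j. integrable (measure_pmf M) (f i j)"
  shows "measure_pmf.expectation M (\<lambda>x. \<Sum>i\<in>I. \<Sum>j\<in>J. f i j x)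
       = (\<Sum>i\<in>I. \<Sum>j\<in>J. measure_pmf.expectation M (f i j))"
proof -
  have "measure_pmf.expectation M (\<lambda>x. \<Sum>i\<in>I. \<Sum>j\<in>J. f i j x)
      = (\<Sum>i\<in>I. measure_pmf.expectation M (\<lambda>x. \<Sum>j\<in>J. f i j x))"
    by (rule Bochner_Integration.integral_sum) (use assms in auto)
  also have "\<dots> = (\<Sum>i\<in>I. \<Sum>j\<in>J. measure_pmf.expectation M (f i j))"
    by (intro sum.cong refl Bochner_Integration.integral_sum) (use assms in auto)
  finally show ?thesis .
qed

lemma expectation_pair_pmf:
  fixes f :: "'a \<times> 'b \<Rightarrow> real"
  assumes nonneg: "\<And>x. 0 \<le> f x" and bounded: "\<And>x. f x \<le> B"
  shows "measure_pmf.expectation (pair_pmf M N) f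
       = measure_pmf.expectation M (\<lambda>x. measure_pmf.expectation N (\<lambda>y. f (x, y)))"
proof -
  have "integrable (measure_pmf N) (\<lambda>y. f (x, y))" for x
    by (rule integrable_pmf_bounded[where B = B]) (use nonneg bounded in \<open>auto simp: abs_of_nonneg\<close>)
  then have inner: "(\<integral>\<^sup>+y. ennreal (f (x, y)) \<partial>N) = ennreal (measure_pmf.expectation N (\<lambda>y. f (x, y)))"
    for x by (rule nn_integral_eq_integral) (use nonneg in auto)
  have "measure_pmf.expectation (pair_pmf M N) f = enn2real (\<integral>\<^sup>+x. ennreal (f x) \<partial>pair_pmf M N)"
    by (rule integral_eq_nn_integral) (use nonneg in auto)
  also have "\<dots> = enn2real (\<integral>\<^sup>+x. \<integral>\<^sup>+y. ennreal (f (x, y)) \<partial>N \<partial>M)"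
    by (simp add: nn_integral_pair_pmf')
  also have "\<dots> = enn2real (\<integral>\<^sup>+x. ennreal (measure_pmf.expectation N (\<lambda>y. f (x, y))) \<partial>M)"
    by (simp add: inner)
  also have "\<dots> = measure_pmf.expectation M (\<lambda>x. measure_pmf.expectation N (\<lambda>y. f (x, y)))"
    by (rule integral_eq_nn_integral[symmetric]) (use nonneg in \<open>auto intro!: integral_nonneg_AE\<close>)
  finally show ?thesis .
qed

lemma prob_pair_pmf_conj:
  "measure_pmf.prob (pair_pmf M N) {(x, y). P x \<and> Q y}
     = measure_pmf.prob M {x. P x} * measure_pmf.prob N {y. Q y}"
proof -
  have "measure_pmf.prob (pair_pmf M N) {(x, y). P x \<and> Q y}
      = measure_pmf.expectation (pair_pmf M N) (\<lambda>z. of_bool (P (fst z) \<and> Q (snd z)))"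
    using prob_eq_expectation_of_bool[of "pair_pmf M N" "\<lambda>z. P (fst z) \<and> Q (snd z)"]
    by (simp add: case_prod_unfold)
  also have "\<dots> = measure_pmf.expectation M (\<lambda>x. measure_pmf.expectation N (\<lambda>y. of_bool (P x \<and> Q y)))"
    using expectation_pair_pmf[where f = "\<lambda>z. of_bool (P (fst z) \<and> Q (snd z))" and B = 1] by simp
  also have "\<dots> = measure_pmf.expectation M (\<lambda>x. if P x then measure_pmf.prob N {y. Q y} else 0)"
    by (intro Bochner_Integration.integral_cong refl) (simp add: prob_eq_expectation_of_bool)
  also have "\<dots> = measure_pmf.prob M {x. P x} * measure_pmf.prob N {y. Q y}"
    by (simp add: expectation_if_const)
  finally show ?thesis .
qed

lemma sum_prob_le_of_card_le:
  assumes "finite I" "\<And>x. card {i \<in> I. P i x} \<le> B"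
  shows "(\<Sum>i\<in>I. measure_pmf.prob M {x. P i x}) \<le> real B"
proof -
  have card_eq: "(\<Sum>i\<in>I. of_bool (P i x) :: real) = real (card {i \<in> I. P i x})" for x
    using assms(1) by (simp add: of_bool_def sum.If_cases Int_def conj_commute)
  have "(\<Sum>i\<in>I. measure_pmf.prob M {x. P i x})
      = (\<Sum>i\<in>I. measure_pmf.expectation M (\<lambda>x. of_bool (P i x)))"
    by (simp add: prob_eq_expectation_of_bool)
  also have "\<dots> = measure_pmf.expectation M (\<lambda>x. \<Sum>i\<in>I. of_bool (P i x))"
    by (rule Bochner_Integration.integral_sum[symmetric]) auto
  also have "\<dots> \<le> real B"
  proof (rule measure_pmf.integral_le_const)
    show "integrable (measure_pmf M) (\<lambda>x. \<Sum>i\<in>I. of_bool (P i x) :: real)"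
      by auto
    show "AE x in measure_pmf M. (\<Sum>i\<in>I. of_bool (P i x) :: real) \<le> real B"
      using assms(2) by (simp add: card_eq)
  qed
  finally show ?thesis .
qed

lemma prob_accept_dist_component_indep:
  assumes "i < n" and F_indep: "\<And>a c. F (a(i := c)) = F a"
  shows "measure_pmf.prob (accept_dist n D) {a. a i j \<and> F a}
       = measure_pmf.prob (D i) {x. x j} * measure_pmf.prob (accept_dist n D) {a. F a}"
proof -
  let ?R = "Pi_pmf ({..<n} - {i}) (\<lambda>_. False) D"
  have "insert i ({..<n} - {i}) = {..<n}"
    using assms(1) by auto
  then have split: "accept_dist n D = map_pmf (\<lambda>(x, f). f(i := x)) (pair_pmf (D i) ?R)"
    unfolding accept_dist_def using Pi_pmf_insert[of "{..<n} - {i}" i "\<lambda>_. False" D] by simp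
  have "measure_pmf.prob (accept_dist n D) {a. a i j \<and> F a} = measure_pmf.prob (pair_pmf (D i) ?R) {(x, f). x j \<and> F f}"
    unfolding split by (simp add: vimage_def case_prod_unfold F_indep)
  also have "\<dots> = measure_pmf.prob (D i) {x. x j} * measure_pmf.prob ?R {f. F f}"
    by (rule prob_pair_pmf_conj)
  also have "measure_pmf.prob ?R {f. F f} = measure_pmf.prob (pair_pmf (D i) ?R) {(x, f). True \<and> F f}"
    using prob_pair_pmf_conj[of "D i" ?R "\<lambda>_. True" F] by simp
  also have "\<dots> = measure_pmf.prob (accept_dist n D) {a. F a}"
    unfolding split by (simp add: vimage_def case_prod_unfold F_indep)
  finally show ?thesis .
qed

section \<open>The LP bounds every policy\<close>

definition offer_prob ::
    "nat \<Rightarrow> nat \<Rightarrow> nat \<Rightarrow> (nat \<Rightarrow> (nat \<Rightarrow> bool) pmf) \<Rightarrow> policy \<Rightarrow> nat \<Rightarrow> nat \<Rightarrow> real" where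
  "offer_prob n k T D pol i j = measure_pmf.prob (accept_dist n D) {a. \<exists>b. (i, j, b) \<in> offers n k pol a T}"

lemma prob_accepted_offer:
  assumes "i < n" "j < k" and marginal: "measure_pmf.prob (D i) {x. x j} = p i j"
  shows "measure_pmf.prob (accept_dist n D) {a. (i, j, True) \<in> offers n k pol a T}
       = p i j * offer_prob n k T D pol i j"
proof -
  have "{a. (i, j, True) \<in> offers n k pol a T} = {a. a i j \<and> (\<exists>b. (i, j, b) \<in> offers n k pol a T)}"
    using offers_in_range by fastforce
  then show ?thesis
    unfolding offer_prob_def marginal[symmetric]
    by (simp add: prob_accept_dist_component_indep assms(1) offered_upd_iff)
qed

lemma R_pol_eq_lp_obj_offer_prob:
  assumes marginal: "\<forall>i<n. \<forall>j<k. measure_pmf.prob (D i) {x. x j} = p i j"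
  shows "R_pol n k T D v pol = lp_obj n k p v (offer_prob n k T D pol)"
proof -
  let ?M = "accept_dist n D"
  have "R_pol n k T D v pol = measure_pmf.expectation ?M
      (\<lambda>a. \<Sum>i<n. \<Sum>j<k. if (i, j, True) \<in> offers n k pol a T then v i j else 0)"
    unfolding R_pol_def reward_run ..
  also have "\<dots> = (\<Sum>i<n. \<Sum>j<k. measure_pmf.expectation ?M
      (\<lambda>a. if (i, j, True) \<in> offers n k pol a T then v i j else 0))"
    by (rule integral_double_sum) auto
  also have "\<dots> = (\<Sum>i<n. \<Sum>j<k. v i j * (p i j * offer_prob n k T D pol i j))"
    by (intro sum.cong refl) (simp add: expectation_if_const prob_accepted_offer marginal)
  also have "\<dots> = lp_obj n k p v (offer_prob n k T D pol)"
    unfolding lp_obj_def by (subst sum.swap) (simp add: mult.assoc)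
  finally show ?thesis .
qed

lemma lp_feasible_offer_prob:
  assumes marginal: "\<forall>i<n. \<forall>j<k. measure_pmf.prob (D i) {x. x j} = p i j"
  shows "lp_feasible n k T p (offer_prob n k T D pol)"
proof -
  let ?M = "accept_dist n D"
  have "(\<Sum>i<n. offer_prob n k T D pol i j) \<le> real T" for j
    unfolding offer_prob_def by (rule sum_prob_le_of_card_le[OF _ card_offered_at_position_le]) simp
  moreover have "(\<Sum>i<n. p i j * offer_prob n k T D pol i j) \<le> 1" if "j < k" for j
  proof -
    have "(\<Sum>i<n. p i j * offer_prob n k T D pol i j)
        = (\<Sum>i<n. measure_pmf.prob ?M {a. (i, j, True) \<in> offers n k pol a T})"
      using prob_accepted_offer marginal that by simp
    also have "\<dots> \<le> real 1"
      by (rule sum_prob_le_of_card_le[OF _ card_accepted_at_position_le]) simp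
    finally show ?thesis by simp
  qed
  moreover have "(\<Sum>j<k. offer_prob n k T D pol i j) \<le> real 1" for i
    unfolding offer_prob_def by (rule sum_prob_le_of_card_le[OF _ card_offered_positions_le]) simp
  moreover have "0 \<le> offer_prob n k T D pol i j \<and> offer_prob n k T D pol i j \<le> 1" for i j
    unfolding offer_prob_def by simp
  ultimately show ?thesis
    unfolding lp_feasible_def by simp
qed

lemma lp_obj_nonneg:
  assumes "\<forall>i<n. \<forall>j<k. 0 \<le> p i j" "\<forall>i<n. \<forall>j<k. 0 \<le> v i j" "lp_feasible n k T p y"
  shows "0 \<le> lp_obj n k p v y"
  using assms unfolding lp_obj_def lp_feasible_def by (intro sum_nonneg) auto

lemma LP_par_eq_lp_obj:
  assumes "lp_optimal n k T p v y"
  shows "LP_par n k T p v = lp_obj n k p v y"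
  unfolding LP_par_def
  by (rule cSup_eq_maximum) (use assms in \<open>auto simp: lp_optimal_def\<close>)

lemma R_pol_bounds:
  assumes "\<forall>i<n. \<forall>j<k. 0 \<le> p i j" "\<forall>i<n. \<forall>j<k. 0 \<le> v i j"
    and marginal: "\<forall>i<n. \<forall>j<k. measure_pmf.prob (D i) {x. x j} = p i j"
    and opt: "lp_optimal n k T p v y"
  shows "0 \<le> R_pol n k T D v pol \<and> R_pol n k T D v pol \<le> lp_obj n k p v y"
proof -
  have feasible: "lp_feasible n k T p (offer_prob n k T D pol)"
    by (rule lp_feasible_offer_prob[OF marginal])
  show ?thesis
    unfolding R_pol_eq_lp_obj_offer_prob[OF marginal]
    using lp_obj_nonneg[OF assms(1,2) feasible] opt feasible unfolding lp_optimal_def by blast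
qed

lemma OPT_par_le_LP_par:
  assumes "\<forall>i<n. \<forall>j<k. 0 \<le> p i j" "\<forall>i<n. \<forall>j<k. 0 \<le> v i j"
    and "\<forall>i<n. \<forall>j<k. measure_pmf.prob (D i) {x. x j} = p i j"
    and opt: "lp_optimal n k T p v y"
  shows "OPT_par n k T D v \<le> LP_par n k T p v"
  unfolding OPT_par_def LP_par_eq_lp_obj[OF opt]
proof (rule cSUP_least)
  fix Q
  have bounds: "0 \<le> R_pol n k T D v pol \<and> R_pol n k T D v pol \<le> lp_obj n k p v y" for pol
    using R_pol_bounds[OF assms] .
  show "R_rand n k T D v Q \<le> lp_obj n k p v y"
    unfolding R_rand_def
  proof (rule measure_pmf.integral_le_const)
    show "integrable (measure_pmf Q) (R_pol n k T D v)"
      by (rule integrable_pmf_bounded[where B = "lp_obj n k p v y"]) (use bounds in \<open>auto simp: abs_of_nonneg\<close>)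
  qed (use bounds in auto)
qed simp

section \<open>The list policy\<close>

definition lists_disjoint :: "nat \<Rightarrow> nat \<Rightarrow> (nat \<Rightarrow> nat \<Rightarrow> bool) \<Rightarrow> bool" where
  "lists_disjoint n k Y \<longleftrightarrow> (\<forall>i<n. \<forall>j<k. \<forall>j'<k. Y i j \<longrightarrow> Y i j' \<longrightarrow> j = j')"

definition max_selected :: "'a set \<Rightarrow> ('a \<Rightarrow> real) \<Rightarrow> ('a \<Rightarrow> bool) \<Rightarrow> real" where
  "max_selected S w z = Max (insert 0 {w i | i. i \<in> S \<and> z i})"

lemma alg_policy_SomeD:
  assumes "alg_policy n k v Y h j = Some i"
  shows "j < k \<and> \<not> filled h j \<and> i < n \<and> Y i j \<and> \<not> offered h i \<and>
    (\<forall>i'. i' < n \<and> Y i' j \<and> \<not> offered h i' \<longrightarrow> v i' j \<le> v i j)"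
proof -
  let ?C = "{i. i < n \<and> Y i j \<and> \<not> offered h i}"
  have C: "j < k \<and> \<not> filled h j \<and> ?C \<noteq> {}"
    and i: "i = (LEAST i. i \<in> ?C \<and> (\<forall>i'\<in>?C. v i' j \<le> v i j))"
    using assms unfolding alg_policy_def Let_def by (auto split: if_splits)
  have "finite ?C" by simp
  then have "Max ((\<lambda>x. v x j) ` ?C) \<in> (\<lambda>x. v x j) ` ?C"
    using C by (intro Max_in) auto
  then obtain m where "m \<in> ?C" "v m j = Max ((\<lambda>x. v x j) ` ?C)"
    by auto
  then have "\<exists>x. x \<in> ?C \<and> (\<forall>i'\<in>?C. v i' j \<le> v x j)"
    using \<open>finite ?C\<close> by auto
  then have "i \<in> ?C \<and> (\<forall>i'\<in>?C. v i' j \<le> v i j)"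
    unfolding i by (rule LeastI_ex)
  then show ?thesis using C by blast
qed

lemma alg_policy_NoneD:
  assumes "alg_policy n k v Y h j = None" "j < k" "\<not> filled h j" "i < n" "Y i j"
  shows "offered h i"
  using assms unfolding alg_policy_def Let_def by (auto split: if_splits)

lemma valid_round_alg_policy:
  assumes "lists_disjoint n k Y"
  shows "valid_round n k h (alg_policy n k v Y h)"
  unfolding valid_round_def
proof (intro conjI allI impI)
  fix j j' i
  assume "alg_policy n k v Y h j = Some i \<and> alg_policy n k v Y h j' = Some i"
  then show "j = j'"
    using alg_policy_SomeD[of n k v Y h j i] alg_policy_SomeD[of n k v Y h j' i] assms
    unfolding lists_disjoint_def by blast
qed (use alg_policy_SomeD in blast)+

context
  fixes n k :: nat and v :: "nat \<Rightarrow> nat \<Rightarrow> real" and Y a :: "nat \<Rightarrow> nat \<Rightarrow> bool"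
  assumes disjoint: "lists_disjoint n k Y"
begin

abbreviation alg :: policy where
  "alg \<equiv> alg_policy n k v Y"

lemma mem_new_offers_alg:
  "(i, j, b) \<in> new_offers n k alg a t \<longleftrightarrow> j < k \<and> b = a i j \<and> alg (run n k alg a t) j = Some i"
  unfolding mem_new_offers using valid_round_alg_policy[OF disjoint] by auto

lemma offers_alg_listed: "(i, j, b) \<in> offers n k alg a t \<Longrightarrow> Y i j"
  by (induction t) (auto simp: offers_Suc mem_new_offers_alg dest: alg_policy_SomeD)

lemma offers_alg_to_listed:
  assumes "(i, j', b) \<in> offers n k alg a t" "i < n" "Y i j" "j < k"
  shows "j' = j \<and> b = a i j"
  using assms offers_in_range[OF assms(1)] offers_alg_listed[OF assms(1)] disjoint
  unfolding lists_disjoint_def by blast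

text \<open>A position is filled by the best accepting candidate of its list: any better one would
  have been offered the position earlier and accepted it.\<close>

lemma accepted_alg_best:
  "(i, j, True) \<in> offers n k alg a t \<Longrightarrow> i' < n \<Longrightarrow> Y i' j \<Longrightarrow> a i' j \<Longrightarrow> v i' j \<le> v i j"
proof (induction t)
  case (Suc t)
  let ?h = "run n k alg a t"
  consider "(i, j, True) \<in> offers n k alg a t" | "(i, j, True) \<in> new_offers n k alg a t"
    using Suc.prems(1) unfolding offers_Suc by blast
  then show ?case
  proof cases
    case 1
    then show ?thesis using Suc by blast
  next
    case 2
    then have choice: "alg ?h j = Some i" and "j < k"
      by (auto simp: mem_new_offers_alg)
    show ?thesis
    proof (cases "offered ?h i'")
      case True
      then obtain j' b where offer: "(i', j', b) \<in> offers n k alg a t"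
        unfolding offered_run_iff by blast
      then have "(i', j, True) \<in> offers n k alg a t"
        using offers_alg_to_listed[OF offer] Suc.prems(2-4) \<open>j < k\<close> by auto
      then have "filled ?h j"
        unfolding filled_run_iff by blast
      then show ?thesis using alg_policy_SomeD[OF choice] by blast
    qed (use alg_policy_SomeD[OF choice] Suc.prems in blast)
  qed
qed simp

text \<open>While position j is unfilled, each round offers it to one more candidate of its list.\<close>

lemma card_offered_listed_ge:
  assumes "j < k" "\<not> filled (run n k alg a t) j"
  shows "min t (card {i. i < n \<and> Y i j}) \<le> card {i. i < n \<and> Y i j \<and> offered (run n k alg a t) i}"
  using assms(2)
proof (induction t)
  case (Suc t)
  let ?h = "run n k alg a t"
  let ?L = "{i. i < n \<and> Y i j}"
  let ?O = "\<lambda>t. {i. i < n \<and> Y i j \<and> offered (run n k alg a t) i}"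
  have "\<not> filled ?h j"
    using Suc.prems offers_mono unfolding filled_run_iff by blast
  then have IH: "min t (card ?L) \<le> card (?O t)"
    by (rule Suc.IH)
  have O_mono: "?O t \<subseteq> ?O (Suc t)"
    using offers_mono unfolding offered_run_iff by blast
  show ?case
  proof (cases "alg ?h j")
    case None
    then have "?L \<subseteq> ?O t"
      using alg_policy_NoneD assms(1) \<open>\<not> filled ?h j\<close> by blast
    then have "card ?L \<le> card (?O (Suc t))"
      using O_mono by (intro card_mono) auto
    then show ?thesis by simp
  next
    case (Some i)
    then have "(i, j, a i j) \<in> new_offers n k alg a t"
      using assms(1) by (simp add: mem_new_offers_alg)
    then have "insert i (?O t) \<subseteq> ?O (Suc t)"
      using alg_policy_SomeD[OF Some] O_mono unfolding offered_run_iff offers_Suc by blast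
    moreover have "i \<notin> ?O t"
      using alg_policy_SomeD[OF Some] by blast
    ultimately have "card (?O t) + 1 \<le> card (?O (Suc t))"
      using card_mono[of "?O (Suc t)" "insert i (?O t)"] by simp
    then show ?thesis using IH by linarith
  qed
qed simp

lemma alg_position_value_ge:
  assumes "card {i. i < n \<and> Y i j} \<le> T" "j < k" "i' < n" "Y i' j" "a i' j"
  shows "\<exists>i. (i, j, True) \<in> offers n k alg a T \<and> v i' j \<le> v i j"
proof (cases "filled (run n k alg a T) j")
  case True
  then show ?thesis
    using accepted_alg_best assms(3-5) unfolding filled_run_iff by blast
next
  case False
  let ?L = "{i. i < n \<and> Y i j}"
  let ?O = "{i. i < n \<and> Y i j \<and> offered (run n k alg a T) i}"
  have "card ?L \<le> card ?O"
    using card_offered_listed_ge[OF assms(2) False] assms(1) by simp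
  then have "?O = ?L"
    by (intro card_seteq) auto
  then obtain j' b where offer: "(i', j', b) \<in> offers n k alg a T"
    using assms(3,4) unfolding offered_run_iff by blast
  then have "(i', j, True) \<in> offers n k alg a T"
    using offers_alg_to_listed[OF offer] assms(2-5) by auto
  then show ?thesis
    using False unfolding filled_run_iff by blast
qed

lemma reward_alg_ge_max_selected:
  assumes "\<forall>j<k. card {i. i < n \<and> Y i j} \<le> T" "\<forall>i<n. \<forall>j<k. 0 \<le> v i j"
  shows "(\<Sum>j<k. max_selected {..<n} (\<lambda>i. v i j) (\<lambda>i. Y i j \<and> a i j)) \<le> reward v (run n k alg a T)"
proof -
  let ?value = "\<lambda>j i. if (i, j, True) \<in> offers n k alg a T then v i j else 0"
  have "max_selected {..<n} (\<lambda>i. v i j) (\<lambda>i. Y i j \<and> a i j) \<le> (\<Sum>i<n. ?value j i)" if "j < k" for j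
  proof -
    let ?A = "{v i j | i. i \<in> {..<n} \<and> Y i j \<and> a i j}"
    have value_nonneg: "0 \<le> ?value j i" if "i < n" for i
      using assms(2) \<open>j < k\<close> that by auto
    have "Max (insert 0 ?A) \<in> insert 0 ?A"
      by (intro Max_in) auto
    then consider "Max (insert 0 ?A) = 0"
      | i' where "i' < n" "Y i' j" "a i' j" "Max (insert 0 ?A) = v i' j"
      by auto
    then show ?thesis
    proof cases
      case 1
      then show ?thesis
        unfolding max_selected_def using value_nonneg by (auto intro!: sum_nonneg)
    next
      case 2
      then obtain i where i: "(i, j, True) \<in> offers n k alg a T" "v i' j \<le> v i j"
        using alg_position_value_ge assms(1) \<open>j < k\<close> by blast
      have "?value j i \<le> (\<Sum>i<n. ?value j i)"
        using offers_in_range[OF i(1)] value_nonneg by (intro member_le_sum) auto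
      then show ?thesis
        unfolding max_selected_def using 2 i by simp
    qed
  qed
  then have "(\<Sum>j<k. max_selected {..<n} (\<lambda>i. v i j) (\<lambda>i. Y i j \<and> a i j)) \<le> (\<Sum>j<k. \<Sum>i<n. ?value j i)"
    by (intro sum_mono) simp
  also have "\<dots> = reward v (run n k alg a T)"
    unfolding reward_run by (rule sum.swap)
  finally show ?thesis .
qed

end

section \<open>Expected maximum of the selected weights\<close>

lemma max_selected_nonneg: "finite S \<Longrightarrow> 0 \<le> max_selected S w z"
  unfolding max_selected_def by (intro Max_ge) auto

lemma max_selected_le_sum_abs: "finite S \<Longrightarrow> max_selected S w z \<le> (\<Sum>i\<in>S. \<bar>w i\<bar>)"
  unfolding max_selected_def
proof (intro Max.boundedI)
  assume "finite S"
  then show "finite (insert 0 {w i |i. i \<in> S \<and> z i})" by simp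
  show "insert 0 {w i |i. i \<in> S \<and> z i} \<noteq> {}" by simp
  fix x assume "x \<in> insert 0 {w i |i. i \<in> S \<and> z i}"
  then consider "x = 0" | i where "i \<in> S" "x = w i" by auto
  then show "x \<le> (\<Sum>i\<in>S. \<bar>w i\<bar>)"
  proof cases
    case 1
    then show ?thesis by (simp add: sum_nonneg)
  next
    case 2
    then have "\<bar>w i\<bar> \<le> (\<Sum>i\<in>S. \<bar>w i\<bar>)" using \<open>finite S\<close> by (intro member_le_sum) auto
    then show ?thesis using 2 by simp
  qed
qed

lemma max_selected_ge: "finite S \<Longrightarrow> i \<in> S \<Longrightarrow> z i \<Longrightarrow> w i \<le> max_selected S w z"
  unfolding max_selected_def by (intro Max_ge) auto

lemma max_selected_split_min:
  assumes fin: "finite S" and m: "m \<in> S" and min: "\<forall>i\<in>S. w m \<le> w i"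
  shows "(if \<exists>i\<in>S. z i then w m else 0) + max_selected (S - {m}) (\<lambda>i. w i - w m) z
       \<le> max_selected S w z"
proof (cases "\<exists>i\<in>S. z i")
  case False
  then have "{w i - w m |i. i \<in> S - {m} \<and> z i} = {}"
    by auto
  then have "max_selected (S - {m}) (\<lambda>i. w i - w m) z = 0"
    unfolding max_selected_def by (simp only:) simp
  then show ?thesis
    using False max_selected_nonneg[OF fin] by simp
next
  case True
  then obtain i1 where i1: "i1 \<in> S" "z i1"
    by blast
  let ?A = "{w i - w m |i. i \<in> S - {m} \<and> z i}"
  have "Max (insert 0 ?A) \<in> insert 0 ?A"
    using fin by (intro Max_in) auto
  then consider "max_selected (S - {m}) (\<lambda>i. w i - w m) z = 0"
    | i2 where "i2 \<in> S - {m}" "z i2" "max_selected (S - {m}) (\<lambda>i. w i - w m) z = w i2 - w m"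
    unfolding max_selected_def by auto
  then show ?thesis
  proof cases
    case 1
    have "w m \<le> w i1"
      using min i1 by blast
    also have "\<dots> \<le> max_selected S w z"
      using max_selected_ge[of S i1 z w] fin i1 by blast
    finally show ?thesis using 1 True by simp
  next
    case 2
    then have "w i2 \<le> max_selected S w z"
      using max_selected_ge[of S i2 z w] fin by blast
    then show ?thesis using 2 True by simp
  qed
qed

lemma integrable_max_selected [intro]:
  assumes "finite S"
  shows "integrable (measure_pmf M) (\<lambda>x. max_selected S w (Z x))"
proof (rule integrable_pmf_bounded)
  show "\<bar>max_selected S w (Z x)\<bar> \<le> (\<Sum>i\<in>S. \<bar>w i\<bar>)" for x
    using max_selected_nonneg[OF assms, of w "Z x"] max_selected_le_sum_abs[OF assms, of w "Z x"]
    by simp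
qed

lemma expectation_max_selected_split_min:
  assumes fin: "finite S" and m: "m \<in> S" and min: "\<forall>i\<in>S. w m \<le> w i"
  shows "w m * measure_pmf.expectation M (\<lambda>x. of_bool (\<exists>i\<in>S. Z x i))
      + measure_pmf.expectation M (\<lambda>x. max_selected (S - {m}) (\<lambda>i. w i - w m) (Z x))
    \<le> measure_pmf.expectation M (\<lambda>x. max_selected S w (Z x))"
proof -
  let ?some = "\<lambda>x. of_bool (\<exists>i\<in>S. Z x i) :: real"
  let ?rest = "\<lambda>x. max_selected (S - {m}) (\<lambda>i. w i - w m) (Z x)"
  have "finite (S - {m})"
    using fin by simp
  then have "w m * measure_pmf.expectation M ?some + measure_pmf.expectation M ?rest
      = measure_pmf.expectation M (\<lambda>x. w m * ?some x + ?rest x)"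
    by (subst Bochner_Integration.integral_add) auto
  also have "\<dots> \<le> measure_pmf.expectation M (\<lambda>x. max_selected S w (Z x))"
  proof (rule integral_mono)
    show "integrable (measure_pmf M) (\<lambda>x. w m * ?some x + ?rest x)"
      using \<open>finite (S - {m})\<close> by (intro Bochner_Integration.integrable_add integrable_mult_right) auto
    show "integrable (measure_pmf M) (\<lambda>x. max_selected S w (Z x))"
      using fin by auto
    show "w m * ?some x + ?rest x \<le> max_selected S w (Z x)" for x
      using max_selected_split_min[OF fin m min, of "Z x"] by (cases "\<exists>i\<in>S. Z x i") auto
  qed
  finally show ?thesis .
qed

text \<open>Peeling off the smallest weight w_m reduces the bound for S to the hypothesis for U = S,
  scaled by w_m, plus the bound for S - {m} with the weights shifted down by w_m.\<close>

lemma expectation_max_selected_ge: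
  fixes M :: "'b pmf" and Z :: "'b \<Rightarrow> nat \<Rightarrow> bool" and q :: "nat \<Rightarrow> real"
  assumes "0 \<le> c" "finite S0"
    and cover: "\<And>U. U \<subseteq> S0 \<Longrightarrow> c * (\<Sum>i\<in>U. q i) \<le> measure_pmf.expectation M (\<lambda>x. of_bool (\<exists>i\<in>U. Z x i))"
  shows "S \<subseteq> S0 \<Longrightarrow> \<forall>i\<in>S. 0 \<le> w i \<Longrightarrow>
    c * (\<Sum>i\<in>S. w i * q i) \<le> measure_pmf.expectation M (\<lambda>x. max_selected S w (Z x))"
proof (induction "card S" arbitrary: S w rule: less_induct)
  case less
  have fin: "finite S"
    using less.prems(1) assms(2) finite_subset by blast
  show ?case
  proof (cases "S = {}")
    case True
    then show ?thesis by (simp add: max_selected_def)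
  next
    case False
    have "Min (w ` S) \<in> w ` S"
      using fin False by (intro Min_in) auto
    then obtain m where m: "m \<in> S" "w m = Min (w ` S)"
      by auto
    have min: "\<forall>i\<in>S. w m \<le> w i"
      using m fin by auto
    let ?S' = "S - {m}" and ?w' = "\<lambda>i. w i - w m"
    have "card ?S' < card S"
      using m fin by (meson card_Diff1_less)
    then have IH: "c * (\<Sum>i\<in>?S'. ?w' i * q i) \<le> measure_pmf.expectation M (\<lambda>x. max_selected ?S' ?w' (Z x))"
      using less.hyps[of ?S' ?w'] less.prems min by auto
    have "w m * (c * (\<Sum>i\<in>S. q i)) \<le> w m * measure_pmf.expectation M (\<lambda>x. of_bool (\<exists>i\<in>S. Z x i))"
      using cover[of S] less.prems m(1) by (intro mult_left_mono) auto
    moreover have "c * (\<Sum>i\<in>S. w i * q i) = w m * (c * (\<Sum>i\<in>S. q i)) + c * (\<Sum>i\<in>?S'. ?w' i * q i)"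
    proof -
      have "(\<Sum>i\<in>S. w i * q i) = w m * q m + (\<Sum>i\<in>?S'. w i * q i)"
        and "(\<Sum>i\<in>S. q i) = q m + (\<Sum>i\<in>?S'. q i)"
        using fin m(1) by (simp_all add: sum.remove)
      moreover have "(\<Sum>i\<in>?S'. ?w' i * q i) = (\<Sum>i\<in>?S'. w i * q i) - w m * (\<Sum>i\<in>?S'. q i)"
        by (simp add: left_diff_distrib sum_subtractf sum_distrib_left)
      moreover have "c * (w m * q m + A) = w m * (c * (q m + B)) + c * (A - w m * B)" for A B
        by (simp add: algebra_simps)
      ultimately show ?thesis
        by presburger
    qed
    ultimately show ?thesis
      using IH expectation_max_selected_split_min[OF fin m(1) min, of M Z] by linarith
  qed
qed

section \<open>The coverage bound\<close>

lemma one_minus_prod_ge: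
  fixes x :: "'a \<Rightarrow> real"
  assumes "finite U" "\<forall>i\<in>U. 0 \<le> x i \<and> x i \<le> 1" "(\<Sum>i\<in>U. x i) \<le> 1"
  shows "(1 - 1 / exp 1) * (\<Sum>i\<in>U. x i) \<le> 1 - (\<Prod>i\<in>U. 1 - x i)"
proof -
  let ?s = "\<Sum>i\<in>U. x i"
  have "0 \<le> ?s" using assms by (intro sum_nonneg) auto
  have "(\<Prod>i\<in>U. 1 - x i) \<le> (\<Prod>i\<in>U. exp (- x i))"
  proof (rule prod_mono)
    fix i assume "i \<in> U"
    then show "0 \<le> 1 - x i \<and> 1 - x i \<le> exp (- x i)"
      using assms(2) exp_ge_add_one_self[of "- x i"] by auto
  qed
  also have "\<dots> = exp (- ?s)"
    using exp_sum[of U "\<lambda>i. - x i"] assms(1) by (simp add: sum_negf)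
  also have "\<dots> \<le> (1 - ?s) * exp 0 + ?s * exp (-1)"
    using convex_onD[OF exp_convex, of ?s 0 "-1"] \<open>0 \<le> ?s\<close> assms(3) by simp
  also have "\<dots> = 1 - (1 - 1 / exp 1) * ?s"
    by (simp add: exp_minus field_simps)
  finally show ?thesis by simp
qed

lemma prob_some_accepts:
  assumes "U \<subseteq> {..<n}" "j < k"
    and marginal: "\<forall>i<n. \<forall>j<k. measure_pmf.prob (D i) {x. x j} = p i j"
  shows "measure_pmf.prob (accept_dist n D) {a. \<exists>i\<in>U. Y i j \<and> a i j}
       = 1 - (\<Prod>i\<in>U. 1 - p i j * of_bool (Y i j))"
proof -
  define B where "B i = (if i \<in> U then {x. \<not> (Y i j \<and> x j)} else UNIV)" for i
  have "measure_pmf.prob (accept_dist n D) {a. \<not> (\<exists>i\<in>U. Y i j \<and> a i j)}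
      = measure_pmf.prob (accept_dist n D) (Pi {..<n} B)"
    using assms(1) unfolding B_def Pi_def by (intro arg_cong[where f = "measure_pmf.prob _"]) auto
  also have "\<dots> = (\<Prod>i<n. measure_pmf.prob (D i) (B i))"
    unfolding accept_dist_def by (rule measure_Pi_pmf_Pi) simp
  also have "\<dots> = (\<Prod>i<n. if i \<in> U then 1 - p i j * of_bool (Y i j) else 1)"
    using marginal assms(2) prob_Collect_not[of "D _" "\<lambda>x. x j"]
    by (intro prod.cong refl) (auto simp: B_def)
  also have "\<dots> = (\<Prod>i\<in>U. 1 - p i j * of_bool (Y i j))"
    using assms(1) by (simp add: prod.If_cases Int_absorb1)
  finally show ?thesis
    using prob_Collect_not[of "accept_dist n D" "\<lambda>a. \<exists>i\<in>U. Y i j \<and> a i j"] by simp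
qed

lemma prod_of_bool: "finite W \<Longrightarrow> (\<Prod>i\<in>W. of_bool (P i) :: real) = of_bool (\<forall>i\<in>W. P i)"
  by (induction W rule: finite_induct) auto

text \<open>Expanding both products over the subsets W of U turns the negative correlation of the
  complements into the claimed inequality, all coefficients being nonnegative.\<close>

lemma expectation_prod_neg_correlated_le:
  assumes "finite U" "\<forall>i\<in>U. 0 \<le> p i \<and> p i \<le> 1"
    and negcorr: "\<And>W. W \<subseteq> U \<Longrightarrow>
      measure_pmf.prob M {x. \<forall>i\<in>W. \<not> E i x} \<le> (\<Prod>i\<in>W. measure_pmf.prob M {x. \<not> E i x})"
  shows "measure_pmf.expectation M (\<lambda>x. \<Prod>i\<in>U. 1 - p i * of_bool (E i x))
       \<le> (\<Prod>i\<in>U. 1 - p i * measure_pmf.prob M {x. E i x})"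
proof -
  define coef where "coef W = (\<Prod>i\<in>W. p i) * (\<Prod>i\<in>U - W. 1 - p i)" for W
  have coef_nonneg: "0 \<le> coef W" if "W \<subseteq> U" for W
    unfolding coef_def using assms(2) that by (intro mult_nonneg_nonneg prod_nonneg) auto
  have expand: "(\<Prod>i\<in>U. p i * f i + (1 - p i)) = (\<Sum>W\<in>Pow U. coef W * (\<Prod>i\<in>W. f i))" for f
    unfolding prod_add[OF assms(1)] coef_def by (simp add: prod.distrib mult_ac)
  have pointwise: "(\<Prod>i\<in>U. 1 - p i * of_bool (E i x)) = (\<Sum>W\<in>Pow U. coef W * of_bool (\<forall>i\<in>W. \<not> E i x))"
    for x
  proof -
    have "(\<Prod>i\<in>U. 1 - p i * of_bool (E i x)) = (\<Prod>i\<in>U. p i * of_bool (\<not> E i x) + (1 - p i))"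
      by (intro prod.cong refl) auto
    also have "\<dots> = (\<Sum>W\<in>Pow U. coef W * (\<Prod>i\<in>W. of_bool (\<not> E i x)))"
      by (rule expand)
    also have "\<dots> = (\<Sum>W\<in>Pow U. coef W * of_bool (\<forall>i\<in>W. \<not> E i x))"
      using assms(1) by (intro sum.cong refl) (auto simp: prod_of_bool finite_subset)
    finally show ?thesis .
  qed
  have "measure_pmf.expectation M (\<lambda>x. \<Prod>i\<in>U. 1 - p i * of_bool (E i x))
      = (\<Sum>W\<in>Pow U. coef W * measure_pmf.prob M {x. \<forall>i\<in>W. \<not> E i x})"
    unfolding pointwise by (subst Bochner_Integration.integral_sum) (auto simp: prob_eq_expectation_of_bool)
  also have "\<dots> \<le> (\<Sum>W\<in>Pow U. coef W * (\<Prod>i\<in>W. 1 - measure_pmf.prob M {x. E i x}))"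
    using negcorr by (intro sum_mono mult_left_mono coef_nonneg) (auto simp: prob_Collect_not)
  also have "\<dots> = (\<Prod>i\<in>U. p i * (1 - measure_pmf.prob M {x. E i x}) + (1 - p i))"
    by (rule expand[symmetric])
  also have "\<dots> = (\<Prod>i\<in>U. 1 - p i * measure_pmf.prob M {x. E i x})"
    by (simp add: algebra_simps)
  finally show ?thesis .
qed

lemma gkps_rounding_prob:
  "gkps_rounding n k y Yd \<Longrightarrow> \<forall>i<n. \<forall>j<k. measure_pmf.prob Yd {Y. Y i j} = y i j"
  unfolding gkps_rounding_def by (erule conjunct1)

lemma gkps_rounding_candidate_degree:
  "gkps_rounding n k y Yd \<Longrightarrow> \<forall>Y\<in>set_pmf Yd. \<forall>i<n.
    real (card {j. j < k \<and> Y i j}) \<in> {of_int \<lfloor>\<Sum>j<k. y i j\<rfloor>, of_int \<lceil>\<Sum>j<k. y i j\<rceil>}"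
  unfolding gkps_rounding_def by (erule conjunct2[THEN conjunct1])

lemma gkps_rounding_position_degree:
  "gkps_rounding n k y Yd \<Longrightarrow> \<forall>Y\<in>set_pmf Yd. \<forall>j<k.
    real (card {i. i < n \<and> Y i j}) \<in> {of_int \<lfloor>\<Sum>i<n. y i j\<rfloor>, of_int \<lceil>\<Sum>i<n. y i j\<rceil>}"
  unfolding gkps_rounding_def by (erule conjunct2[THEN conjunct2, THEN conjunct1])

lemma gkps_rounding_position_neg_correlated:
  "gkps_rounding n k y Yd \<Longrightarrow> \<forall>j<k. \<forall>S\<subseteq>{..<n}. \<forall>b.
    measure_pmf.prob Yd {Y. \<forall>i\<in>S. Y i j = b} \<le> (\<Prod>i\<in>S. measure_pmf.prob Yd {Y. Y i j = b})"
  unfolding gkps_rounding_def by (erule conjunct2[THEN conjunct2, THEN conjunct2, THEN conjunct2])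

lemma prob_some_listed_accepts:
  assumes "U \<subseteq> {..<n}" "j < k"
    and p01: "\<forall>i<n. \<forall>j<k. 0 \<le> p i j \<and> p i j \<le> 1"
    and marginal: "\<forall>i<n. \<forall>j<k. measure_pmf.prob (D i) {x. x j} = p i j"
  shows "measure_pmf.prob (pair_pmf Yd (accept_dist n D)) {x. \<exists>i\<in>U. fst x i j \<and> snd x i j}
       = 1 - measure_pmf.expectation Yd (\<lambda>Y. \<Prod>i\<in>U. 1 - p i j * of_bool (Y i j))"
proof -
  let ?A = "accept_dist n D"
  let ?none = "\<lambda>Y. \<Prod>i\<in>U. 1 - p i j * of_bool (Y i j)"
  have "measure_pmf.prob (pair_pmf Yd ?A) {x. \<exists>i\<in>U. fst x i j \<and> snd x i j}
      = measure_pmf.expectation Yd (\<lambda>Y. measure_pmf.expectation ?A (\<lambda>a. of_bool (\<exists>i\<in>U. Y i j \<and> a i j)))"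
    using prob_eq_expectation_of_bool[of "pair_pmf Yd ?A" "\<lambda>x. \<exists>i\<in>U. fst x i j \<and> snd x i j"]
      expectation_pair_pmf[where f = "\<lambda>x. of_bool (\<exists>i\<in>U. fst x i j \<and> snd x i j)" and B = 1]
    by simp
  also have "\<dots> = measure_pmf.expectation Yd (\<lambda>Y. 1 - ?none Y)"
    using prob_some_accepts[OF assms(1,2) marginal]
    by (intro Bochner_Integration.integral_cong refl) (simp add: prob_eq_expectation_of_bool)
  also have "\<dots> = 1 - measure_pmf.expectation Yd ?none"
  proof (subst Bochner_Integration.integral_diff)
    have "0 \<le> ?none Y \<and> ?none Y \<le> 1" for Y
      using p01 assms(1,2) by (auto intro!: prod_nonneg prod_le_1)
    then show "integrable (measure_pmf Yd) ?none"
      by (intro integrable_pmf_bounded[where B = 1]) auto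
  qed auto
  finally show ?thesis .
qed

lemma expectation_prod_rounded_le:
  assumes "U \<subseteq> {..<n}" "j < k"
    and p01: "\<forall>i<n. \<forall>j<k. 0 \<le> p i j \<and> p i j \<le> 1"
    and rounding: "gkps_rounding n k y Yd"
  shows "measure_pmf.expectation Yd (\<lambda>Y. \<Prod>i\<in>U. 1 - p i j * of_bool (Y i j))
       \<le> (\<Prod>i\<in>U. 1 - p i j * y i j)"
proof -
  have "finite U"
    using assms(1) finite_subset by blast
  have "measure_pmf.expectation Yd (\<lambda>Y. \<Prod>i\<in>U. 1 - p i j * of_bool (Y i j))
      \<le> (\<Prod>i\<in>U. 1 - p i j * measure_pmf.prob Yd {Y. Y i j})"
  proof (rule expectation_prod_neg_correlated_le[OF \<open>finite U\<close>])
    show "\<forall>i\<in>U. 0 \<le> p i j \<and> p i j \<le> 1"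
      using p01 assms(1,2) by auto
    show "measure_pmf.prob Yd {Y. \<forall>i\<in>W. \<not> Y i j} \<le> (\<Prod>i\<in>W. measure_pmf.prob Yd {Y. \<not> Y i j})"
      if "W \<subseteq> U" for W
    proof -
      have "W \<subseteq> {..<n}"
        using assms(1) that by blast
      then have "measure_pmf.prob Yd {Y. \<forall>i\<in>W. Y i j = False}
          \<le> (\<Prod>i\<in>W. measure_pmf.prob Yd {Y. Y i j = False})"
        using gkps_rounding_position_neg_correlated[OF rounding] assms(2) by blast
      then show ?thesis by simp
    qed
  qed
  also have "\<dots> = (\<Prod>i\<in>U. 1 - p i j * y i j)"
    using gkps_rounding_prob[OF rounding] assms(1,2) by (intro prod.cong refl) auto
  finally show ?thesis .
qed

lemma prob_some_listed_accepts_ge: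
  assumes "U \<subseteq> {..<n}" "j < k"
    and p01: "\<forall>i<n. \<forall>j<k. 0 \<le> p i j \<and> p i j \<le> 1"
    and marginal: "\<forall>i<n. \<forall>j<k. measure_pmf.prob (D i) {x. x j} = p i j"
    and feasible: "lp_feasible n k T p y"
    and rounding: "gkps_rounding n k y Yd"
  shows "(1 - 1 / exp 1) * (\<Sum>i\<in>U. p i j * y i j)
       \<le> measure_pmf.prob (pair_pmf Yd (accept_dist n D)) {x. \<exists>i\<in>U. fst x i j \<and> snd x i j}"
proof -
  have "finite U"
    using assms(1) finite_subset by blast
  have y01: "0 \<le> y i j \<and> y i j \<le> 1" if "i \<in> U" for i
    using feasible assms(1,2) that unfolding lp_feasible_def by blast
  have "(\<Sum>i\<in>U. p i j * y i j) \<le> (\<Sum>i<n. p i j * y i j)"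
    using assms(1,2) p01 feasible unfolding lp_feasible_def by (intro sum_mono2) auto
  also have "\<dots> \<le> 1"
    using feasible assms(2) unfolding lp_feasible_def by blast
  finally have "(1 - 1 / exp 1) * (\<Sum>i\<in>U. p i j * y i j) \<le> 1 - (\<Prod>i\<in>U. 1 - p i j * y i j)"
    using p01 y01 assms(1,2) by (intro one_minus_prod_ge[OF \<open>finite U\<close>]) (auto simp: mult_le_one)
  also have "\<dots> \<le> 1 - measure_pmf.expectation Yd (\<lambda>Y. \<Prod>i\<in>U. 1 - p i j * of_bool (Y i j))"
    using expectation_prod_rounded_le[OF assms(1,2) p01 rounding] by simp
  also have "\<dots> = measure_pmf.prob (pair_pmf Yd (accept_dist n D)) {x. \<exists>i\<in>U. fst x i j \<and> snd x i j}"
    by (rule prob_some_listed_accepts[OF assms(1,2) p01 marginal, symmetric])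
  finally show ?thesis .
qed

section \<open>The guarantee of the list policy\<close>

lemma nat_le_of_rounded_le:
  assumes "real m \<in> {of_int \<lfloor>s\<rfloor>, of_int \<lceil>s\<rceil>}" "s \<le> real N"
  shows "m \<le> N"
proof -
  have "\<lceil>s\<rceil> \<le> int N"
    using assms(2) by (simp add: ceiling_le)
  moreover have "real_of_int \<lfloor>s\<rfloor> \<le> real N"
    using assms(2) of_int_floor_le[of s] by linarith
  ultimately have "real m \<le> real N"
    using assms(1) by auto
  then show ?thesis by simp
qed

lemma rounded_list_card_le:
  assumes "gkps_rounding n k y Yd" "lp_feasible n k T p y" "Y \<in> set_pmf Yd" "j < k"
  shows "card {i. i < n \<and> Y i j} \<le> T"
proof (rule nat_le_of_rounded_le)
  show "real (card {i. i < n \<and> Y i j}) \<in> {of_int \<lfloor>\<Sum>i<n. y i j\<rfloor>, of_int \<lceil>\<Sum>i<n. y i j\<rceil>}"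
    using gkps_rounding_position_degree[OF assms(1)] assms(3,4) by blast
  show "(\<Sum>i<n. y i j) \<le> real T"
    using assms(2,4) unfolding lp_feasible_def by blast
qed

lemma rounded_lists_disjoint:
  assumes "gkps_rounding n k y Yd" "lp_feasible n k T p y" "Y \<in> set_pmf Yd"
  shows "lists_disjoint n k Y"
  unfolding lists_disjoint_def
proof (intro allI impI)
  fix i j j'
  assume "i < n" "j < k" "j' < k" "Y i j" "Y i j'"
  have "card {j. j < k \<and> Y i j} \<le> 1"
  proof (rule nat_le_of_rounded_le)
    show "real (card {j. j < k \<and> Y i j}) \<in> {of_int \<lfloor>\<Sum>j<k. y i j\<rfloor>, of_int \<lceil>\<Sum>j<k. y i j\<rceil>}"
      using gkps_rounding_candidate_degree[OF assms(1)] assms(3) \<open>i < n\<close> by blast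
    show "(\<Sum>j<k. y i j) \<le> real 1"
      using assms(2) \<open>i < n\<close> unfolding lp_feasible_def by simp
  qed
  then show "j = j'"
    using card_le_Suc0_iff_eq[of "{j. j < k \<and> Y i j}"] \<open>j < k\<close> \<open>j' < k\<close> \<open>Y i j\<close> \<open>Y i j'\<close> by auto
qed

lemma R_pol_alg_ge_expectation_max_selected:
  assumes v_nonneg: "\<forall>i<n. \<forall>j<k. 0 \<le> v i j"
    and feasible: "lp_feasible n k T p y"
    and rounding: "gkps_rounding n k y Yd"
    and "Y \<in> set_pmf Yd"
  shows "measure_pmf.expectation (accept_dist n D)
      (\<lambda>a. \<Sum>j<k. max_selected {..<n} (\<lambda>i. v i j) (\<lambda>i. Y i j \<and> a i j)) \<le> R_pol n k T D v (alg_policy n k v Y)"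
  unfolding R_pol_def
proof (rule integral_mono)
  have "0 \<le> (\<Sum>j<k. max_selected {..<n} (\<lambda>i. v i j) (\<lambda>i. Y i j \<and> a i j))
      \<and> (\<Sum>j<k. max_selected {..<n} (\<lambda>i. v i j) (\<lambda>i. Y i j \<and> a i j)) \<le> (\<Sum>j<k. \<Sum>i<n. \<bar>v i j\<bar>)" for a
    by (auto intro!: sum_nonneg sum_mono max_selected_nonneg max_selected_le_sum_abs)
  then show "integrable (measure_pmf (accept_dist n D))
      (\<lambda>a. \<Sum>j<k. max_selected {..<n} (\<lambda>i. v i j) (\<lambda>i. Y i j \<and> a i j))"
    by (intro integrable_pmf_bounded[where B = "\<Sum>j<k. \<Sum>i<n. \<bar>v i j\<bar>"]) simp
  show "integrable (measure_pmf (accept_dist n D)) (\<lambda>a. reward v (run n k (alg_policy n k v Y) a T))"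
    unfolding reward_run by (intro Bochner_Integration.integrable_sum integrable_pmf_if)
  show "(\<Sum>j<k. max_selected {..<n} (\<lambda>i. v i j) (\<lambda>i. Y i j \<and> a i j))
      \<le> reward v (run n k (alg_policy n k v Y) a T)" for a
    using reward_alg_ge_max_selected[OF rounded_lists_disjoint[OF rounding feasible \<open>Y \<in> set_pmf Yd\<close>]]
      rounded_list_card_le[OF rounding feasible \<open>Y \<in> set_pmf Yd\<close>] v_nonneg
    by simp
qed

lemma R_alg_ge_expectation_max_selected:
  assumes p01: "\<forall>i<n. \<forall>j<k. 0 \<le> p i j \<and> p i j \<le> 1"
    and v_nonneg: "\<forall>i<n. \<forall>j<k. 0 \<le> v i j"
    and marginal: "\<forall>i<n. \<forall>j<k. measure_pmf.prob (D i) {x. x j} = p i j"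
    and opt: "lp_optimal n k T p v y"
    and rounding: "gkps_rounding n k y Yd"
  shows "measure_pmf.expectation (pair_pmf Yd (accept_dist n D))
      (\<lambda>x. \<Sum>j<k. max_selected {..<n} (\<lambda>i. v i j) (\<lambda>i. fst x i j \<and> snd x i j)) \<le> R_alg n k T D v Yd"
proof -
  let ?A = "accept_dist n D"
  let ?F = "\<lambda>x. \<Sum>j<k. max_selected {..<n} (\<lambda>i. v i j) (\<lambda>i. fst x i j \<and> snd x i j)"
  let ?B = "\<Sum>j<k. \<Sum>i<n. \<bar>v i j\<bar>"
  have feasible: "lp_feasible n k T p y"
    using opt unfolding lp_optimal_def by blast
  have F_bounds: "0 \<le> ?F x \<and> ?F x \<le> ?B" for x
    by (auto intro!: sum_nonneg sum_mono max_selected_nonneg max_selected_le_sum_abs)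
  have "measure_pmf.expectation (pair_pmf Yd ?A) ?F
      = measure_pmf.expectation Yd (\<lambda>Y. measure_pmf.expectation ?A (\<lambda>a. ?F (Y, a)))"
    using expectation_pair_pmf[where f = ?F and B = ?B] F_bounds by simp
  also have "\<dots> \<le> R_alg n k T D v Yd"
    unfolding R_alg_def
  proof (rule integral_mono_AE)
    show "integrable (measure_pmf Yd) (\<lambda>Y. measure_pmf.expectation ?A (\<lambda>a. ?F (Y, a)))"
      using F_bounds
      by (intro integrable_pmf_bounded[where B = ?B])
        (auto simp: abs_of_nonneg intro!: integral_nonneg_AE measure_pmf.integral_le_const
          integrable_pmf_bounded[where B = ?B])
    show "integrable (measure_pmf Yd) (\<lambda>Y. R_pol n k T D v (alg_policy n k v Y))"
      using R_pol_bounds[OF _ v_nonneg marginal opt] p01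
      by (intro integrable_pmf_bounded[where B = "lp_obj n k p v y"]) (simp add: abs_of_nonneg)
    show "AE Y in measure_pmf Yd. measure_pmf.expectation ?A (\<lambda>a. ?F (Y, a))
        \<le> R_pol n k T D v (alg_policy n k v Y)"
      using R_pol_alg_ge_expectation_max_selected[OF v_nonneg feasible rounding]
      by (simp add: AE_measure_pmf_iff)
  qed
  finally show ?thesis .
qed

lemma R_alg_ge_lp_obj:
  assumes p01: "\<forall>i<n. \<forall>j<k. 0 \<le> p i j \<and> p i j \<le> 1"
    and v_nonneg: "\<forall>i<n. \<forall>j<k. 0 \<le> v i j"
    and marginal: "\<forall>i<n. \<forall>j<k. measure_pmf.prob (D i) {x. x j} = p i j"
    and opt: "lp_optimal n k T p v y"
    and rounding: "gkps_rounding n k y Yd"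
  shows "(1 - 1 / exp 1) * lp_obj n k p v y \<le> R_alg n k T D v Yd"
proof -
  let ?P = "pair_pmf Yd (accept_dist n D)"
  let ?best = "\<lambda>j x. max_selected {..<n} (\<lambda>i. v i j) (\<lambda>i. fst x i j \<and> snd x i j)"
  have feasible: "lp_feasible n k T p y"
    using opt unfolding lp_optimal_def by blast
  have "0 \<le> 1 - 1 / exp (1::real)"
    by simp
  have position: "(1 - 1 / exp 1) * (\<Sum>i<n. v i j * (p i j * y i j)) \<le> measure_pmf.expectation ?P (?best j)"
    if "j < k" for j
  proof (rule expectation_max_selected_ge[where S0 = "{..<n}"])
    show "(1 - 1 / exp 1) * (\<Sum>i\<in>U. p i j * y i j)
        \<le> measure_pmf.expectation ?P (\<lambda>x. of_bool (\<exists>i\<in>U. fst x i j \<and> snd x i j))"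
      if "U \<subseteq> {..<n}" for U
      using prob_some_listed_accepts_ge[OF that \<open>j < k\<close> p01 marginal feasible rounding]
        prob_eq_expectation_of_bool[of ?P "\<lambda>x. \<exists>i\<in>U. fst x i j \<and> snd x i j"]
      by simp
  qed (use \<open>0 \<le> 1 - 1 / exp 1\<close> v_nonneg that in auto)
  have "(1 - 1 / exp 1) * lp_obj n k p v y = (\<Sum>j<k. (1 - 1 / exp 1) * (\<Sum>i<n. v i j * (p i j * y i j)))"
    unfolding lp_obj_def by (simp add: sum_distrib_left mult.assoc)
  also have "\<dots> \<le> (\<Sum>j<k. measure_pmf.expectation ?P (?best j))"
    using position by (intro sum_mono) simp
  also have "\<dots> = measure_pmf.expectation ?P (\<lambda>x. \<Sum>j<k. ?best j x)"
    by (rule Bochner_Integration.integral_sum[symmetric]) auto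
  also have "\<dots> \<le> R_alg n k T D v Yd"
    by (rule R_alg_ge_expectation_max_selected[OF p01 v_nonneg marginal opt rounding])
  finally show ?thesis .
qed

theorem theorem5p1:
  fixes n k T :: nat
    and p v y :: "nat \<Rightarrow> nat \<Rightarrow> real"
    and D :: "nat \<Rightarrow> (nat \<Rightarrow> bool) pmf"
    and Yd :: "(nat \<Rightarrow> nat \<Rightarrow> bool) pmf"
  assumes "1 \<le> k" and "k \<le> T" and "T \<le> n"
    and "\<forall>i<n. \<forall>j<k. 0 \<le> p i j \<and> p i j \<le> 1"
    and "\<forall>i<n. \<forall>j<k. 0 \<le> v i j"
    and "\<forall>i<n. \<forall>j<k. measure_pmf.prob (D i) {a. a j} = p i j"
    and "lp_optimal n k T p v y"
    and "gkps_rounding n k y Yd"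
  shows "R_alg n k T D v Yd \<ge> (1 - 1 / exp 1) * LP_par n k T p v
       \<and> (1 - 1 / exp 1) * LP_par n k T p v \<ge> (1 - 1 / exp 1) * OPT_par n k T D v"
proof
  show "R_alg n k T D v Yd \<ge> (1 - 1 / exp 1) * LP_par n k T p v"
    using R_alg_ge_lp_obj[OF assms(4-8)] LP_par_eq_lp_obj[OF assms(7)] by simp
  have "OPT_par n k T D v \<le> LP_par n k T p v"
    using OPT_par_le_LP_par assms(4-7) by blast
  then show "(1 - 1 / exp 1) * LP_par n k T p v \<ge> (1 - 1 / exp 1) * OPT_par n k T D v"
    by (intro mult_left_mono) auto
qed

end
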